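(* Let $S\subset\mathbb{C}^n$ be a polysector and let $f$ be holomorphic in $S$ and asymptotically bounded in $S$. If $f$ has null strong asymptotic expansion following a multidirection $\boldsymbol{\alpha}=(\alpha_1,\dots,\alpha_n)$ in $S$, i.e. for every $\boldsymbol{N}\in\mathbb{N}_0^n$ there is $c(\boldsymbol{N})>0$ with $|f(\boldsymbol{z})|\le c(\boldsymbol{N})|\boldsymbol{z}|^{\boldsymbol{N}}$ for all $\boldsymbol{z}\in S$ with $\arg\boldsymbol{z}=\boldsymbol{\alpha}$, then $f$ has null strong asymptotic expansion in $S$, i.e. for every $T\prec S$ and every $\boldsymbol{N}\in\mathbb{N}_0^n$ there exists $c>0$ with $|f(\boldsymbol{z})|\le c|\boldsymbol{z}|^{\boldsymbol{N}}$ for all $\boldsymbol{z}\in T$.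
   Context: A sector is $S(\alpha,\beta;\rho)=\{z:0<|z|<\rho,\ \arg z\in(\alpha,\beta)\}$, a polysector is a product $S=\prod_jS(\alpha_j,\beta_j;\rho_j)$, and a multidirection in $S$ is $\boldsymbol{\theta}$ with $\alpha_j<\theta_j<\beta_j$. $T=\prod T_j\prec S$ means each $T_j$ is a bounded sector with $\overline{T_j}\setminus\{0\}\subset S_j$. $f$ is asymptotically bounded in $S$ if bounded on every $T\prec S$. $|\boldsymbol{z}|^{\boldsymbol{N}}=\prod|z_j|^{N_j}$. *)

theory Defs
  imports "HOL-Analysis.Analysis"
begin

text \<open>Sector S(alpha,beta;rho) = {z. 0 < |z| < rho, arg z in (alpha,beta)};
  "arg z = t" is read as z = |z| e^{i t}.\<close>
definition sector :: "real \<Rightarrow> real \<Rightarrow> real \<Rightarrow> complex set" where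
  "sector \<alpha> \<beta> \<rho> = {z. 0 < norm z \<and> norm z < \<rho> \<and>
      (\<exists>t. \<alpha> < t \<and> t < \<beta> \<and> z = complex_of_real (norm z) * cis t)}"

definition polysector :: "real^'n \<Rightarrow> real^'n \<Rightarrow> real^'n \<Rightarrow> (complex^'n) set" where
  "polysector a b r = {z. \<forall>j. z $ j \<in> sector (a $ j) (b $ j) (r $ j)}"

definition psub :: "real^'n \<Rightarrow> real^'n \<Rightarrow> real^'n \<Rightarrow>
                    real^'n \<Rightarrow> real^'n \<Rightarrow> real^'n \<Rightarrow> bool" where
  "psub a' b' r' a b r \<longleftrightarrow>
     (\<forall>j. closure (sector (a' $ j) (b' $ j) (r' $ j)) - {0} \<subseteq> sector (a $ j) (b $ j) (r $ j))"

definition holomorphic_n :: "(complex^'n \<Rightarrow> complex) \<Rightarrow> (complex^'n) set \<Rightarrow> bool" where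
  "holomorphic_n f U \<longleftrightarrow> (\<forall>z\<in>U. \<exists>L. (f has_derivative L) (at z) \<and>
       (\<forall>c w. L (c *s w) = c * L w))"

definition asympt_bounded :: "(complex^'n \<Rightarrow> complex) \<Rightarrow> real^'n \<Rightarrow> real^'n \<Rightarrow> real^'n \<Rightarrow> bool" where
  "asympt_bounded f a b r \<longleftrightarrow>
     (\<forall>a' b' r'. psub a' b' r' a b r \<longrightarrow> bounded (f ` polysector a' b' r'))"

definition monpow :: "complex^'n \<Rightarrow> nat^'n \<Rightarrow> real" where
  "monpow z N = (\<Prod>j\<in>UNIV. norm (z $ j) ^ (N $ j))"

end

theory Submission
  imports Defs "HOL-Complex_Analysis.Conformal_Mappings"
begin

text \<open>Let T \<prec> S and z \<in> T. The arguments \<psi>_j of z_j and the directions \<theta>_j lie in compact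
  intervals [lo_j, hi_j] \<subset> (a_j, b_j) independent of z. The entire curve
  Z(\<zeta>)_j = |z_j| e^(i \<theta>_j) e^((\<psi>_j - \<theta>_j) \<zeta>) has Z(i) = z, maps the real axis into the ray
  arg = \<theta>, and for a small \<epsilon> > 0, again independent of z, maps the rectangle
  [-\<epsilon>, \<epsilon>] \<times> [0, 1 + \<epsilon>] into a fixed polysector S' \<prec> S on which |f| \<le> M. On the real segment
  |Z(s)_j| \<le> e^(\<epsilon> (hi_j - lo_j)) |z_j|, so the hypothesis along \<theta> gives |f(Z(s))| \<le> c E |z|^(kN).
  The two-constants theorem for f \<circ> Z on the rectangle gives |f(z)| \<le> M^(1-\<mu>) (c E |z|^(kN))^\<mu>
  with \<mu> > 0 depending only on \<epsilon>; choosing k \<mu> \<ge> 1 turns this into |f(z)| \<le> C |z|^N on T.\<close>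

section \<open>Two-constants theorem on a rectangle\<close>

text \<open>Its real part is the harmonic majorant of the two-constants theorem for the rectangle
  \<open>[-\<sigma>, \<sigma>] \<times> [0, h]\<close> with the bottom side singled out.\<close>
definition rectangle_weight :: "real \<Rightarrow> real \<Rightarrow> complex \<Rightarrow> complex" where
  "rectangle_weight \<sigma> h z =
     - \<i> * sin (of_real (pi / (2*\<sigma>)) * (\<i> * of_real h - z)) / of_real (sinh (pi / (2*\<sigma>) * h))"

lemma Re_rectangle_weight:
  "Re (rectangle_weight \<sigma> h z) =
     cos (pi / (2*\<sigma>) * Re z) * sinh (pi / (2*\<sigma>) * (h - Im z)) / sinh (pi / (2*\<sigma>) * h)"
proof -
  define w where "w = of_real (pi / (2*\<sigma>)) * (\<i> * of_real h - z)"
  have "Re w = - (pi / (2*\<sigma>) * Re z)" "Im w = pi / (2*\<sigma>) * (h - Im z)"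
    by (simp_all add: w_def)
  then show ?thesis
    by (simp add: rectangle_weight_def w_def[symmetric] Im_sin sinh_def)
qed

lemma Re_rectangle_weight_real_le_1:
  assumes "\<sigma> > 0" "h > 0" shows "Re (rectangle_weight \<sigma> h (of_real s)) \<le> 1"
  using assms by (simp add: Re_rectangle_weight)

lemma Re_rectangle_weight_eq_0:
  assumes "\<sigma> > 0" "Im z = h \<or> \<bar>Re z\<bar> = \<sigma>"
  shows "Re (rectangle_weight \<sigma> h z) = 0"
proof -
  have "Im z = h \<or> cos (pi / (2*\<sigma>) * Re z) = 0"
    using assms by (auto simp: abs_if split: if_splits)
  then show ?thesis by (auto simp: Re_rectangle_weight)
qed

lemma rectangle_weighted_bound:
  fixes G :: "complex \<Rightarrow> complex" and \<sigma> h :: real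
  defines "R \<equiv> box (Complex (-\<sigma>) 0) (Complex \<sigma> h)"
  assumes "\<sigma> > 0" "h > 0" "D \<ge> 0"
    and cont: "continuous_on (closure R) G" and hol: "G holomorphic_on R"
    and M: "\<And>z. z \<in> closure R \<Longrightarrow> norm (G z) \<le> M"
    and B: "\<And>s. \<bar>s\<bar> \<le> \<sigma> \<Longrightarrow> norm (G (of_real s)) \<le> B"
    and BM: "B * exp D \<le> M" and "\<zeta> \<in> R"
  shows "norm (G \<zeta>) * exp (D * Re (rectangle_weight \<sigma> h \<zeta>)) \<le> M"
proof -
  define H where "H z = G z * exp (of_real D * rectangle_weight \<sigma> h z)" for z
  have norm_H: "norm (H z) = norm (G z) * exp (D * Re (rectangle_weight \<sigma> h z))" for z
    by (simp add: H_def norm_mult)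
  have "R \<noteq> {}" using \<open>\<zeta> \<in> R\<close> by blast
  have "norm (H \<zeta>) \<le> M"
  proof (rule maximum_modulus_frontier[of H R])
    have "interior R = R" by (simp add: R_def interior_open open_box)
    then show "H holomorphic_on interior R"
      using hol \<open>h > 0\<close> \<open>\<sigma> > 0\<close> unfolding H_def rectangle_weight_def
      by simp (intro holomorphic_intros, auto)
    show "continuous_on (closure R) H"
      using cont \<open>h > 0\<close> \<open>\<sigma> > 0\<close> unfolding H_def rectangle_weight_def
      by (intro continuous_intros) auto
  next
    fix z assume "z \<in> frontier R"
    then have z: "z \<in> cbox (Complex (-\<sigma>) 0) (Complex \<sigma> h)" "z \<notin> R"
      using \<open>R \<noteq> {}\<close> by (auto simp: R_def frontier_box)
    then have "Im z = 0 \<or> Im z = h \<or> \<bar>Re z\<bar> = \<sigma>"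
      by (force simp: R_def in_cbox_complex_iff in_box_complex_iff)
    moreover have "norm (G z) \<le> M" using M z \<open>R \<noteq> {}\<close> by (simp add: R_def)
    moreover have "norm (H z) \<le> M" if "Im z = 0"
    proof -
      have zs: "z = of_real (Re z)" "\<bar>Re z\<bar> \<le> \<sigma>"
        using that z by (auto simp: complex_eq_iff in_cbox_complex_iff)
      have "norm (H z) \<le> B * exp D"
      proof -
        have "exp (D * Re (rectangle_weight \<sigma> h z)) \<le> exp D"
          using Re_rectangle_weight_real_le_1[OF \<open>\<sigma> > 0\<close> \<open>h > 0\<close>, of "Re z"] \<open>D \<ge> 0\<close> zs(1)
          by (simp add: mult_left_le)
        moreover have "norm (G z) \<le> B" using B[OF zs(2)] zs(1) by metis
        ultimately show ?thesis
          unfolding norm_H by (intro mult_mono) (auto intro: order_trans[OF norm_ge_zero])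
      qed
      with BM show ?thesis by linarith
    qed
    ultimately show "norm (H z) \<le> M"
      using Re_rectangle_weight_eq_0[OF \<open>\<sigma> > 0\<close>, of z] by (auto simp: norm_H)
  qed (use \<open>\<zeta> \<in> R\<close> in \<open>auto simp: R_def\<close>)
  then show ?thesis by (simp add: norm_H)
qed

text \<open>The weight at \<open>\<i>\<close>, i.e. the exponent with which the bound on the bottom side enters.\<close>
definition two_constants_exponent :: "real \<Rightarrow> real \<Rightarrow> real" where
  "two_constants_exponent \<sigma> h = sinh (pi / (2*\<sigma>) * (h - 1)) / sinh (pi / (2*\<sigma>) * h)"

lemma two_constants_exponent_pos:
  assumes "\<sigma> > 0" "h > 1" shows "two_constants_exponent \<sigma> h > 0"
  using assms by (simp add: two_constants_exponent_def)

lemma two_constants_rectangle: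
  fixes G :: "complex \<Rightarrow> complex" and \<sigma> h :: real
  defines "R \<equiv> box (Complex (-\<sigma>) 0) (Complex \<sigma> h)"
    and "\<mu> \<equiv> two_constants_exponent \<sigma> h"
  assumes "\<sigma> > 0" "h > 1" "M > 0" "B > 0"
    and cont: "continuous_on (closure R) G" and hol: "G holomorphic_on R"
    and M: "\<And>z. z \<in> closure R \<Longrightarrow> norm (G z) \<le> M"
    and B: "\<And>s. \<bar>s\<bar> \<le> \<sigma> \<Longrightarrow> norm (G (of_real s)) \<le> B"
  shows "norm (G \<i>) \<le> M powr (1 - \<mu>) * B powr \<mu>"
proof -
  have "\<i> \<in> R" using assms by (simp add: R_def in_box_complex_iff)
  have \<mu>: "\<mu> = Re (rectangle_weight \<sigma> h \<i>)" "\<mu> > 0"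
    using two_constants_exponent_pos[of \<sigma> h] assms
    by (simp_all add: \<mu>_def two_constants_exponent_def Re_rectangle_weight)
  have "norm (G \<i>) \<le> M" using M \<open>\<i> \<in> R\<close> closure_subset by blast
  show ?thesis
  proof (cases "M \<le> B")
    case True
    have "M = M powr (1 - \<mu>) * M powr \<mu>" using \<open>M > 0\<close> by (simp add: powr_add[symmetric])
    also have "\<dots> \<le> M powr (1 - \<mu>) * B powr \<mu>"
      using True \<open>M > 0\<close> \<mu>(2) by (intro mult_left_mono powr_mono2) auto
    finally show ?thesis using \<open>norm (G \<i>) \<le> M\<close> by linarith
  next
    case False
    define D where "D = ln (M / B)"
    have "D \<ge> 0" "B * exp D = M" using False \<open>B > 0\<close> by (simp_all add: D_def)
    then have "norm (G \<i>) * exp (D * \<mu>) \<le> M"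
      using rectangle_weighted_bound[of \<sigma> h D G M B \<i>] assms \<open>\<i> \<in> R\<close> \<mu>(1)
      by (simp add: R_def)
    then have "norm (G \<i>) \<le> M * exp (- (D * \<mu>))" by (simp add: exp_minus field_simps)
    also have "M * exp (- (D * \<mu>)) = M powr (1 - \<mu>) * B powr \<mu>"
    proof -
      have "(B / M) powr \<mu> = exp (- (D * \<mu>))"
        using \<open>M > 0\<close> \<open>B > 0\<close> by (simp add: powr_def D_def ln_div algebra_simps)
      moreover have "M powr (1 - \<mu>) * B powr \<mu> = M * (B / M) powr \<mu>"
        using \<open>M > 0\<close> \<open>B > 0\<close> by (simp add: powr_diff powr_divide)
      ultimately show ?thesis by simp
    qed
    finally show ?thesis .
  qed
qed

section \<open>Restriction to holomorphic curves\<close>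

lemma has_derivative_vec_componentwise:
  fixes Z :: "complex \<Rightarrow> complex^'n"
  assumes "\<And>j. ((\<lambda>\<zeta>. Z \<zeta> $ j) has_field_derivative Z' j) (at \<zeta>)"
  shows "(Z has_derivative (\<lambda>h. h *s (\<chi> j. Z' j))) (at \<zeta>)"
proof (subst has_derivative_componentwise_within, intro ballI)
  fix i :: "complex^'n" assume "i \<in> Basis"
  then obtain j u where iu: "i = axis j u" "u \<in> Basis" by (auto simp: Basis_vec_def)
  have "(*) (Z' j) = (\<lambda>h. h * Z' j)" by (auto simp: fun_eq_iff)
  then have "((\<lambda>\<zeta>. Z \<zeta> $ j \<bullet> u) has_derivative (\<lambda>h. (h * Z' j) \<bullet> u)) (at \<zeta>)"
    using assms[of j] unfolding has_field_derivative_def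
    by (intro bounded_linear.has_derivative[OF bounded_linear_inner_left]) simp
  then show "((\<lambda>\<zeta>. Z \<zeta> \<bullet> i) has_derivative (\<lambda>h. (h *s (\<chi> j. Z' j)) \<bullet> i)) (at \<zeta>)"
    using iu by (simp add: inner_axis mult.commute)
qed

lemma holomorphic_n_subset: "holomorphic_n f U \<Longrightarrow> V \<subseteq> U \<Longrightarrow> holomorphic_n f V"
  unfolding holomorphic_n_def by blast

lemma holomorphic_n_comp_field_differentiable:
  fixes f :: "complex^'n \<Rightarrow> complex" and Z :: "complex \<Rightarrow> complex^'n"
  assumes f: "holomorphic_n f U" and "Z \<zeta> \<in> U"
    and Z: "\<And>j. (\<lambda>\<zeta>. Z \<zeta> $ j) field_differentiable (at \<zeta>)"
  shows "(f \<circ> Z) field_differentiable (at \<zeta>)"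
proof -
  obtain Z' where Z': "\<And>j. ((\<lambda>\<zeta>. Z \<zeta> $ j) has_field_derivative Z' j) (at \<zeta>)"
    using Z unfolding field_differentiable_def by metis
  obtain L where L: "(f has_derivative L) (at (Z \<zeta>))" and lin: "\<And>c w. L (c *s w) = c * L w"
    using f \<open>Z \<zeta> \<in> U\<close> unfolding holomorphic_n_def by blast
  have "(f \<circ> Z has_derivative L \<circ> (\<lambda>h. h *s (\<chi> j. Z' j))) (at \<zeta>)"
    by (rule diff_chain_at[OF has_derivative_vec_componentwise[OF Z'] L])
  moreover have "L \<circ> (\<lambda>h. h *s (\<chi> j. Z' j)) = (*) (L (\<chi> j. Z' j))"
    by (auto simp: fun_eq_iff lin mult.commute)
  ultimately show ?thesis
    unfolding field_differentiable_def has_field_derivative_def by metis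
qed

lemma two_constants_holomorphic_n:
  fixes f :: "complex^'n \<Rightarrow> complex" and Z :: "complex \<Rightarrow> complex^'n" and \<sigma> h :: real
  defines "R \<equiv> box (Complex (-\<sigma>) 0) (Complex \<sigma> h)"
    and "\<mu> \<equiv> two_constants_exponent \<sigma> h"
  assumes "\<sigma> > 0" "h > 1" "M > 0" "B > 0"
    and f: "holomorphic_n f U"
    and Z: "\<And>j \<zeta>. (\<lambda>\<zeta>. Z \<zeta> $ j) field_differentiable (at \<zeta>)"
    and ZU: "\<And>\<zeta>. \<zeta> \<in> closure R \<Longrightarrow> Z \<zeta> \<in> U"
    and M: "\<And>\<zeta>. \<zeta> \<in> closure R \<Longrightarrow> norm (f (Z \<zeta>)) \<le> M"
    and B: "\<And>s. \<bar>s\<bar> \<le> \<sigma> \<Longrightarrow> norm (f (Z (of_real s))) \<le> B"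
  shows "norm (f (Z \<i>)) \<le> M powr (1 - \<mu>) * B powr \<mu>"
proof -
  have diff: "(f \<circ> Z) field_differentiable (at \<zeta>)" if "\<zeta> \<in> closure R" for \<zeta>
    using holomorphic_n_comp_field_differentiable[OF f ZU[OF that] Z] .
  have "continuous_on (closure R) (f \<circ> Z)"
    using diff by (intro continuous_at_imp_continuous_on ballI field_differentiable_imp_continuous_at)
  moreover have "(f \<circ> Z) holomorphic_on R"
    using diff closure_subset unfolding holomorphic_on_def by (blast intro: field_differentiable_at_within)
  ultimately show ?thesis
    using two_constants_rectangle[of \<sigma> h M B "f \<circ> Z"] assms by (simp add: R_def)
qed

lemma cis_eq_cis_iff: "cis t = cis u \<longleftrightarrow> (\<exists>k::int. t = u + 2 * pi * k)"
proof
  assume "cis t = cis u"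
  then have "cis (t - u) = 1" by (simp add: cis_divide[symmetric])
  then have "exp (\<i> * complex_of_real (t - u)) = 1" by (simp add: cis_conv_exp)
  then obtain n :: int where "t - u = of_int (2 * n) * pi" by (auto simp: exp_eq_1)
  then show "\<exists>k::int. t = u + 2 * pi * k" by (intro exI[of _ n]) (simp add: algebra_simps)
next
  assume "\<exists>k::int. t = u + 2 * pi * k"
  then show "cis t = cis u" by (auto simp: cis_mult[symmetric])
qed

lemma cis_shift_into_period: "\<exists>u\<in>{lo..lo + 2 * pi}. cis t = cis u"
proof -
  define k where "k = \<lceil>(lo - t) / (2 * pi)\<rceil>"
  have "(lo - t) / (2 * pi) \<le> k" "k < (lo - t) / (2 * pi) + 1" unfolding k_def by linarith+
  then have "lo \<le> t + 2 * pi * k" "t + 2 * pi * k \<le> lo + 2 * pi" by (simp_all add: field_simps)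
  then show ?thesis
    by (intro bexI[of _ "t + 2 * pi * k"]) (auto simp: cis_eq_cis_iff intro!: exI[of _ "- k"])
qed

text \<open>If \<open>b - a \<le> 2\<pi>\<close>, a single translate of \<open>[a', b']\<close> by a multiple of \<open>2\<pi>\<close> works:
  otherwise the arc would contain a point with argument \<open>b\<close> modulo \<open>2\<pi>\<close>.\<close>
lemma arc_arguments_in_compact_subinterval:
  assumes "a' \<le> b'" and arc: "\<And>t. t \<in> {a'..b'} \<Longrightarrow> \<exists>u\<in>{a<..<b}. cis t = cis u"
  shows "\<exists>lo hi. a < lo \<and> lo \<le> hi \<and> hi < b \<and> (\<forall>t\<in>{a'..b'}. \<exists>u\<in>{lo..hi}. cis t = cis u)"
proof (cases "b - a \<le> 2 * pi")
  case True
  obtain u k where u: "a < u" "u < b" and k: "a' = u + 2 * pi * of_int k"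
    using arc[of a'] \<open>a' \<le> b'\<close> by (auto simp: cis_eq_cis_iff)
  have "b' - 2 * pi * k < b"
  proof (rule ccontr)
    assume "\<not> ?thesis"
    then have "b + 2 * pi * k \<in> {a'..b'}" using k u by auto
    from arc[OF this] obtain u' m where u': "a < u'" "u' < b"
      and m: "b + 2 * pi * k = u' + 2 * pi * of_int m"
      by (auto simp: cis_eq_cis_iff)
    have "2 * pi * of_int (m - k) = b - u'" using m by (simp add: algebra_simps)
    then have "2 * pi * 0 < 2 * pi * of_int (m - k)" "2 * pi * of_int (m - k) < 2 * pi * 1"
      using u' True by auto
    then have "(0::real) < of_int (m - k)" "of_int (m - k) < (1::real)"
      by (auto simp: mult_less_cancel_left_pos zero_less_mult_iff)
    then have "0 < m - k" "m - k < 1" by simp_all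
    then show False by linarith
  qed
  moreover have "cis t = cis (t - 2 * pi * k)" for t
    by (auto simp: cis_eq_cis_iff intro: exI[of _ k])
  ultimately show ?thesis
    using u k \<open>a' \<le> b'\<close>
    by (intro exI[of _ u] exI[of _ "b' - 2 * pi * k"] conjI ballI bexI[of _ "_ - 2 * pi * k"]) auto
next
  case False
  define lo where "lo = (a + b) / 2 - pi"
  have "a < lo" "lo + 2 * pi < b" using False by (simp_all add: lo_def field_simps)
  then show ?thesis
    using cis_shift_into_period[of lo] by (intro exI[of _ lo] exI[of _ "lo + 2 * pi"]) auto
qed

lemma sector_eq_rcis_image: "sector a b r = case_prod rcis ` ({0<..<r} \<times> {a<..<b})"
  by (force simp: sector_def rcis_def norm_mult)

lemma rcis_in_sector: "0 < x \<Longrightarrow> x < r \<Longrightarrow> a < t \<Longrightarrow> t < b \<Longrightarrow> rcis x t \<in> sector a b r"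
  unfolding sector_eq_rcis_image by (intro image_eqI[of _ _ "(x, t)"]) auto

lemma closure_sector_subset: "closure (sector a b r) \<subseteq> case_prod rcis ` ({0..r} \<times> {a..b})"
proof (rule closure_minimal)
  show "sector a b r \<subseteq> case_prod rcis ` ({0..r} \<times> {a..b})"
    unfolding sector_eq_rcis_image by (intro image_mono) auto
  show "closed (case_prod rcis ` ({0..r} \<times> {a..b}))"
    by (intro compact_imp_closed compact_continuous_image compact_Times compact_Icc)
       (auto intro!: continuous_intros simp: split_beta)
qed

lemma rcis_in_closure_sector:
  assumes "a < b" "0 < r" "0 \<le> x" "x \<le> r" "a \<le> t" "t \<le> b"
  shows "rcis x t \<in> closure (sector a b r)"
proof -
  have "case_prod rcis ` closure ({0<..<r} \<times> {a<..<b}) \<subseteq> closure (sector a b r)"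
    unfolding sector_eq_rcis_image
    by (intro image_closure_subset closure_subset) (auto intro!: continuous_intros simp: split_beta)
  then show ?thesis using assms by (force simp: closure_Times)
qed

lemma closure_sector_minus_0_subset:
  assumes "a < a'" "b' < b" "r' < r"
  shows "closure (sector a' b' r') - {0} \<subseteq> sector a b r"
proof
  fix z assume "z \<in> closure (sector a' b' r') - {0}"
  then obtain x t where "z = rcis x t" "0 \<le> x" "x \<le> r'" "a' \<le> t" "t \<le> b'" "x \<noteq> 0"
    using closure_sector_subset[of a' b' r'] by auto
  then show "z \<in> sector a b r" using assms by (auto intro: rcis_in_sector)
qed

lemma sector_mono: "a \<le> a' \<Longrightarrow> b' \<le> b \<Longrightarrow> r' \<le> r \<Longrightarrow> sector a' b' r' \<subseteq> sector a b r"
  by (force simp: sector_eq_rcis_image)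

lemma polysector_mono:
  assumes "\<And>j. a $ j \<le> a' $ j \<and> b' $ j \<le> b $ j \<and> r' $ j \<le> r $ j"
  shows "polysector a' b' r' \<subseteq> polysector a b r"
proof
  fix z assume z: "z \<in> polysector a' b' r'"
  have "z $ j \<in> sector (a $ j) (b $ j) (r $ j)" for j
    using assms[of j] sector_mono[of "a $ j" "a' $ j" "b' $ j" "b $ j" "r' $ j" "r $ j"] z
    unfolding polysector_def by auto
  then show "z \<in> polysector a b r" unfolding polysector_def by simp
qed

lemma subsector_arguments:
  assumes sub: "closure (sector a' b' r') - {0} \<subseteq> sector a b r"
    and "sector a' b' r' \<noteq> {}"
  shows "r' < r" "\<exists>lo hi. a < lo \<and> lo \<le> hi \<and> hi < b \<and>
           (\<forall>z\<in>sector a' b' r'. \<exists>t\<in>{lo..hi}. z = rcis (norm z) t)"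
proof -
  have "a' < b'" "0 < r'" using \<open>sector a' b' r' \<noteq> {}\<close> by (auto simp: sector_eq_rcis_image)
  have in_sector: "rcis x t \<in> sector a b r" if "0 < x" "x \<le> r'" "a' \<le> t" "t \<le> b'" for x t
    using rcis_in_closure_sector[OF \<open>a' < b'\<close> \<open>0 < r'\<close>, of x t] that sub by auto
  show "r' < r"
    using in_sector[of r' a'] \<open>a' < b'\<close> \<open>0 < r'\<close> by (simp add: sector_def)
  have "\<exists>u\<in>{a<..<b}. cis t = cis u" if "t \<in> {a'..b'}" for t
  proof -
    have "rcis r' t \<in> sector a b r" using in_sector[of r' t] that \<open>0 < r'\<close> by auto
    then obtain u where "a < u" "u < b" "rcis r' t = of_real (norm (rcis r' t)) * cis u"
      unfolding sector_def by blast
    then show ?thesis using \<open>0 < r'\<close> by (auto simp: rcis_def norm_mult)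
  qed
  then obtain lo hi where lohi: "a < lo" "lo \<le> hi" "hi < b"
    and arg: "\<forall>t\<in>{a'..b'}. \<exists>u\<in>{lo..hi}. cis t = cis u"
    using arc_arguments_in_compact_subinterval[of a' b' a b] \<open>a' < b'\<close> by auto
  have "\<exists>u\<in>{lo..hi}. z = rcis (norm z) u" if "z \<in> sector a' b' r'" for z
  proof -
    obtain t where "a' < t" "t < b'" "z = rcis (norm z) t"
      using \<open>z \<in> sector a' b' r'\<close> unfolding sector_def rcis_def by blast
    moreover obtain u where "u \<in> {lo..hi}" "cis t = cis u" using arg calculation by force
    ultimately show ?thesis by (metis rcis_def)
  qed
  then show "\<exists>lo hi. a < lo \<and> lo \<le> hi \<and> hi < b \<and>
           (\<forall>z\<in>sector a' b' r'. \<exists>t\<in>{lo..hi}. z = rcis (norm z) t)"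
    using lohi by blast
qed

section \<open>Angular blocks and rotation curves\<close>

definition angular_block :: "real^'n \<Rightarrow> real^'n \<Rightarrow> real^'n \<Rightarrow> (complex^'n) set" where
  "angular_block lo hi r = {z. \<forall>j. 0 < norm (z $ j) \<and> norm (z $ j) < r $ j \<and>
                                  (\<exists>t\<in>{lo $ j..hi $ j}. z $ j = rcis (norm (z $ j)) t)}"

definition block_margin :: "real \<Rightarrow> real^'n \<Rightarrow> real^'n \<Rightarrow> real^'n \<Rightarrow> real^'n \<Rightarrow> real^'n \<Rightarrow> real^'n \<Rightarrow> bool"
  where "block_margin \<epsilon> lo hi r' a b r \<longleftrightarrow>
    (\<forall>j. a $ j < lo $ j - \<epsilon> * (hi $ j - lo $ j) \<and> hi $ j + \<epsilon> * (hi $ j - lo $ j) < b $ j \<and>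
         r' $ j * exp (\<epsilon> * (hi $ j - lo $ j)) \<le> r $ j)"

lemma exists_intermediate_polysector:
  fixes a b r lo hi r' :: "real^'n"
  assumes "\<And>j. a $ j < lo $ j \<and> hi $ j < b $ j \<and> r' $ j < r $ j"
  shows "\<exists>\<epsilon>>0. \<exists>a2 b2 r3. psub a2 b2 r3 a b r \<and> polysector a2 b2 r3 \<subseteq> polysector a b r \<and>
           block_margin \<epsilon> lo hi r' a2 b2 r3"
proof -
  define a2 where "a2 = (\<chi> j. (a $ j + lo $ j) / 2)"
  define b2 where "b2 = (\<chi> j. (hi $ j + b $ j) / 2)"
  define r3 where "r3 = (\<chi> j. (r' $ j + r $ j) / 2)"
  have "\<forall>\<^sub>F \<epsilon> in at_right 0. \<forall>j. a2 $ j < lo $ j - \<epsilon> * (hi $ j - lo $ j) \<and>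
          hi $ j + \<epsilon> * (hi $ j - lo $ j) < b2 $ j \<and> r' $ j * exp (\<epsilon> * (hi $ j - lo $ j)) < r3 $ j"
  proof (intro eventually_all_finite eventually_conj)
    fix j
    have lim: "((\<lambda>\<epsilon>. \<epsilon> * (hi $ j - lo $ j)) \<longlongrightarrow> 0) (at_right 0)"
      by (auto intro!: tendsto_eq_intros)
    show "\<forall>\<^sub>F \<epsilon> in at_right 0. a2 $ j < lo $ j - \<epsilon> * (hi $ j - lo $ j)"
      using order_tendstoD(2)[OF lim, of "(lo $ j - a $ j) / 2"] assms[of j]
      by (auto simp: a2_def elim!: eventually_mono)
    show "\<forall>\<^sub>F \<epsilon> in at_right 0. hi $ j + \<epsilon> * (hi $ j - lo $ j) < b2 $ j"
      using order_tendstoD(2)[OF lim, of "(b $ j - hi $ j) / 2"] assms[of j]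
      by (auto simp: b2_def elim!: eventually_mono)
    have "((\<lambda>\<epsilon>. r' $ j * exp (\<epsilon> * (hi $ j - lo $ j))) \<longlongrightarrow> r' $ j) (at_right 0)"
      by (auto intro!: tendsto_eq_intros)
    then show "\<forall>\<^sub>F \<epsilon> in at_right 0. r' $ j * exp (\<epsilon> * (hi $ j - lo $ j)) < r3 $ j"
      using assms[of j] by (intro order_tendstoD(2)) (auto simp: r3_def)
  qed
  then obtain \<epsilon> where "\<epsilon> > 0" and \<epsilon>: "\<forall>j. a2 $ j < lo $ j - \<epsilon> * (hi $ j - lo $ j) \<and>
      hi $ j + \<epsilon> * (hi $ j - lo $ j) < b2 $ j \<and> r' $ j * exp (\<epsilon> * (hi $ j - lo $ j)) < r3 $ j"
    unfolding eventually_at_right_field by (metis field_lbound_gt_zero zero_less_one)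
  have "psub a2 b2 r3 a b r"
    unfolding psub_def using assms
    by (intro allI closure_sector_minus_0_subset) (auto simp: a2_def b2_def r3_def)
  moreover have "polysector a2 b2 r3 \<subseteq> polysector a b r"
  proof (rule polysector_mono)
    fix j show "a $ j \<le> a2 $ j \<and> b2 $ j \<le> b $ j \<and> r3 $ j \<le> r $ j"
      using assms[of j] by (simp add: a2_def b2_def r3_def)
  qed
  ultimately show ?thesis
    using \<open>\<epsilon> > 0\<close> \<epsilon> unfolding block_margin_def by (intro exI[of _ \<epsilon>] exI conjI) (auto simp: less_imp_le)
qed

lemma rcis_mult_exp:
  "rcis \<rho> \<theta> * exp (of_real m * Complex s \<phi>) = rcis (\<rho> * exp (m * s)) (\<theta> + m * \<phi>)"
proof -
  have "of_real m * Complex s \<phi> = of_real (m * s) + \<i> * of_real (m * \<phi>)"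
    by (simp add: complex_eq_iff)
  then have "exp (of_real m * Complex s \<phi>) = rcis (exp (m * s)) (m * \<phi>)"
    unfolding rcis_def cis_conv_exp exp_of_real[symmetric] by (simp only: exp_add)
  then show ?thesis by (simp add: rcis_mult)
qed

lemma interpolated_angle_bounds:
  fixes lo hi \<theta> \<psi> \<phi> \<epsilon> :: real
  assumes "lo \<le> \<theta>" "\<theta> \<le> hi" "lo \<le> \<psi>" "\<psi> \<le> hi" "0 \<le> \<phi>" "\<phi> \<le> 1 + \<epsilon>" "0 \<le> \<epsilon>"
  shows "lo - \<epsilon> * (hi - lo) \<le> \<theta> + (\<psi> - \<theta>) * \<phi>" "\<theta> + (\<psi> - \<theta>) * \<phi> \<le> hi + \<epsilon> * (hi - lo)"
proof -
  define e where "e = (\<psi> - \<theta>) * max 0 (\<phi> - 1)"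
  have "\<bar>e\<bar> \<le> (hi - lo) * \<epsilon>"
    unfolding e_def abs_mult using assms by (intro mult_mono) auto
  moreover have "(1 - min \<phi> 1) *\<^sub>R \<theta> + min \<phi> 1 *\<^sub>R \<psi> \<in> {lo..hi}"
    using assms by (intro convexD[OF convex_real_interval(5)]) auto
  then have "\<theta> + (\<psi> - \<theta>) * min \<phi> 1 \<in> {lo..hi}" by (simp add: algebra_simps)
  moreover have "\<theta> + (\<psi> - \<theta>) * \<phi> = \<theta> + (\<psi> - \<theta>) * min \<phi> 1 + e"
    by (simp add: e_def min_def max_def algebra_simps)
  ultimately show "lo - \<epsilon> * (hi - lo) \<le> \<theta> + (\<psi> - \<theta>) * \<phi>"
    "\<theta> + (\<psi> - \<theta>) * \<phi> \<le> hi + \<epsilon> * (hi - lo)"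
    by (auto simp: abs_le_iff mult.commute)
qed

lemma mult_le_of_abs_le:
  fixes m s w \<epsilon> :: real
  assumes "\<bar>m\<bar> \<le> w" "\<bar>s\<bar> \<le> \<epsilon>"
  shows "m * s \<le> \<epsilon> * w"
proof -
  have "m * s \<le> \<bar>m\<bar> * \<bar>s\<bar>" by (simp add: abs_mult[symmetric])
  also have "\<dots> \<le> w * \<epsilon>" using assms by (intro mult_mono) auto
  finally show ?thesis by (simp add: mult.commute)
qed

definition rotation_curve :: "complex^'n \<Rightarrow> real^'n \<Rightarrow> real^'n \<Rightarrow> complex \<Rightarrow> complex^'n" where
  "rotation_curve z \<theta> \<psi> \<zeta> = (\<chi> j. rcis (norm (z $ j)) (\<theta> $ j) * exp (of_real (\<psi> $ j - \<theta> $ j) * \<zeta>))"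

lemma rotation_curve_Complex:
  "rotation_curve z \<theta> \<psi> (Complex s \<phi>) =
     (\<chi> j. rcis (norm (z $ j) * exp ((\<psi> $ j - \<theta> $ j) * s)) (\<theta> $ j + (\<psi> $ j - \<theta> $ j) * \<phi>))"
  unfolding rotation_curve_def rcis_mult_exp ..

lemma rotation_curve_ii:
  assumes "\<And>j. z $ j = rcis (norm (z $ j)) (\<psi> $ j)"
  shows "rotation_curve z \<theta> \<psi> \<i> = z"
proof -
  have "rotation_curve z \<theta> \<psi> (Complex 0 1) $ j = z $ j" for j
    using assms[of j] by (simp add: rotation_curve_Complex)
  moreover have "\<i> = Complex 0 1" by (simp add: complex_eq_iff)
  ultimately show ?thesis by (simp add: vec_eq_iff)
qed

lemma rotation_curve_real:
  "rotation_curve z \<theta> \<psi> (of_real s) = (\<chi> j. rcis (norm (z $ j) * exp ((\<psi> $ j - \<theta> $ j) * s)) (\<theta> $ j))"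
  using rotation_curve_Complex[of z \<theta> \<psi> s 0] by (simp add: complex_of_real_def)

lemma field_differentiable_rotation_curve:
  "(\<lambda>\<zeta>. rotation_curve z \<theta> \<psi> \<zeta> $ j) field_differentiable (at \<zeta>)"
proof -
  have "(\<lambda>\<zeta>. rotation_curve z \<theta> \<psi> \<zeta> $ j) holomorphic_on UNIV"
    unfolding rotation_curve_def by (simp add: holomorphic_intros)
  then show ?thesis using holomorphic_on_imp_differentiable_at by blast
qed

lemma rotation_curve_in_polysector:
  assumes "block_margin \<epsilon> lo hi r' a b r" "z \<in> angular_block lo hi r'"
    and "\<And>j. lo $ j \<le> \<theta> $ j \<and> \<theta> $ j \<le> hi $ j \<and> lo $ j \<le> \<psi> $ j \<and> \<psi> $ j \<le> hi $ j"
    and "\<bar>s\<bar> \<le> \<epsilon>" "0 \<le> \<phi>" "\<phi> \<le> 1 + \<epsilon>"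
  shows "rotation_curve z \<theta> \<psi> (Complex s \<phi>) \<in> polysector a b r"
proof -
  have "0 \<le> \<epsilon>" using \<open>\<bar>s\<bar> \<le> \<epsilon>\<close> by linarith
  have "rcis (norm (z $ j) * exp ((\<psi> $ j - \<theta> $ j) * s)) (\<theta> $ j + (\<psi> $ j - \<theta> $ j) * \<phi>)
          \<in> sector (a $ j) (b $ j) (r $ j)" for j
  proof -
    have margin: "a $ j < lo $ j - \<epsilon> * (hi $ j - lo $ j)" "hi $ j + \<epsilon> * (hi $ j - lo $ j) < b $ j"
      "r' $ j * exp (\<epsilon> * (hi $ j - lo $ j)) \<le> r $ j"
      using assms(1) unfolding block_margin_def by blast+
    have zj: "0 < norm (z $ j)" "norm (z $ j) < r' $ j"
      using assms(2) unfolding angular_block_def by blast+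
    have "(\<psi> $ j - \<theta> $ j) * s \<le> \<epsilon> * (hi $ j - lo $ j)"
      using assms(3)[of j] \<open>\<bar>s\<bar> \<le> \<epsilon>\<close> by (intro mult_le_of_abs_le) auto
    then have "norm (z $ j) * exp ((\<psi> $ j - \<theta> $ j) * s) < r' $ j * exp (\<epsilon> * (hi $ j - lo $ j))"
      using zj by (intro mult_less_le_imp_less) auto
    moreover have "lo $ j - \<epsilon> * (hi $ j - lo $ j) \<le> \<theta> $ j + (\<psi> $ j - \<theta> $ j) * \<phi>"
      "\<theta> $ j + (\<psi> $ j - \<theta> $ j) * \<phi> \<le> hi $ j + \<epsilon> * (hi $ j - lo $ j)"
      using interpolated_angle_bounds[of "lo $ j" "\<theta> $ j" "hi $ j" "\<psi> $ j" \<phi> \<epsilon>] assms(3)[of j]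
        assms(5,6) \<open>0 \<le> \<epsilon>\<close> by auto
    ultimately show ?thesis using margin zj by (intro rcis_in_sector) auto
  qed
  then show ?thesis by (simp add: polysector_def rotation_curve_Complex)
qed

lemma monpow_pos: "(\<And>j. z $ j \<noteq> 0) \<Longrightarrow> 0 < monpow z N"
  unfolding monpow_def by (intro prod_pos) auto

lemma monpow_mult_exponent: "monpow z (\<chi> j. k * N $ j) = monpow z N ^ k"
  unfolding monpow_def by (simp add: prod_power_distrib power_mult[symmetric] mult.commute)

lemma monpow_le_prod: "(\<And>j. norm (z $ j) \<le> r j) \<Longrightarrow> monpow z N \<le> (\<Prod>j\<in>UNIV. r j ^ N $ j)"
  unfolding monpow_def by (intro prod_mono conjI power_mono) auto

lemma monpow_le_scaled:
  assumes "\<And>j. norm (w $ j) \<le> e j * norm (z $ j)"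
  shows "monpow w N \<le> (\<Prod>j\<in>UNIV. e j ^ N $ j) * monpow z N"
proof -
  have "monpow w N \<le> (\<Prod>j\<in>UNIV. (e j * norm (z $ j)) ^ N $ j)"
    using assms by (rule monpow_le_prod)
  then show ?thesis by (simp add: monpow_def power_mult_distrib prod.distrib)
qed

lemma monpow_rotation_curve_real_le:
  assumes "\<bar>s\<bar> \<le> \<epsilon>" "\<And>j. \<bar>\<psi> $ j - \<theta> $ j\<bar> \<le> w j"
  shows "monpow (rotation_curve z \<theta> \<psi> (of_real s)) N \<le> (\<Prod>j\<in>UNIV. exp (\<epsilon> * w j) ^ N $ j) * monpow z N"
proof (rule monpow_le_scaled)
  fix j
  have "(\<psi> $ j - \<theta> $ j) * s \<le> \<epsilon> * w j" using assms by (intro mult_le_of_abs_le)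
  then show "norm (rotation_curve z \<theta> \<psi> (of_real s) $ j) \<le> exp (\<epsilon> * w j) * norm (z $ j)"
    by (simp add: rotation_curve_real mult.commute mult_left_mono)
qed

lemma powr_interpolation_le:
  fixes M K X P \<mu> :: real and k :: nat
  assumes "0 < M" "0 < K" "0 < X" "X \<le> P" "0 < \<mu>" "1 \<le> k * \<mu>"
  shows "M powr (1 - \<mu>) * (K * X ^ k) powr \<mu> \<le> (M powr (1 - \<mu>) * K powr \<mu> * P powr (k * \<mu> - 1)) * X"
proof -
  have "(K * X ^ k) powr \<mu> = K powr \<mu> * (X powr (k * \<mu> - 1) * X)"
    using assms by (simp add: powr_mult powr_realpow[symmetric] powr_powr powr_diff)
  also have "X powr (k * \<mu> - 1) \<le> P powr (k * \<mu> - 1)"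
    using assms by (intro powr_mono2) auto
  finally show ?thesis
    using assms by (simp add: mult_left_mono mult_right_mono mult.assoc)
qed

section \<open>Null expansion on subpolysectors\<close>

lemma norm_le_two_constants_on_angular_block:
  fixes f :: "complex^'n \<Rightarrow> complex" and lo hi :: "real^'n" and \<epsilon> :: real and N :: "nat^'n"
  defines "\<mu> \<equiv> two_constants_exponent \<epsilon> (1 + \<epsilon>)"
    and "E \<equiv> \<Prod>j\<in>UNIV. exp (\<epsilon> * (hi $ j - lo $ j)) ^ N $ j"
  assumes "\<epsilon> > 0" "M > 0" "c > 0" "block_margin \<epsilon> lo hi r' a b r"
    and hol: "holomorphic_n f (polysector a b r)"
    and M: "\<And>w. w \<in> polysector a b r \<Longrightarrow> norm (f w) \<le> M"
    and ray: "\<And>w. w \<in> polysector a b r \<Longrightarrow> (\<forall>j. w $ j = rcis (norm (w $ j)) (\<theta> $ j)) \<Longrightarrow>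
                norm (f w) \<le> c * monpow w N"
    and \<theta>: "\<And>j. lo $ j \<le> \<theta> $ j \<and> \<theta> $ j \<le> hi $ j"
    and z: "z \<in> angular_block lo hi r'"
  shows "norm (f z) \<le> M powr (1 - \<mu>) * (c * E * monpow z N) powr \<mu>"
proof -
  have "\<forall>j. \<exists>t\<in>{lo $ j..hi $ j}. z $ j = rcis (norm (z $ j)) t"
    using z by (simp add: angular_block_def)
  then obtain g where g: "\<forall>j. g j \<in> {lo $ j..hi $ j} \<and> z $ j = rcis (norm (z $ j)) (g j)"
    by metis
  define \<psi> where "\<psi> = (\<chi> j. g j)"
  have \<psi>: "lo $ j \<le> \<psi> $ j \<and> \<psi> $ j \<le> hi $ j \<and> z $ j = rcis (norm (z $ j)) (\<psi> $ j)" for j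
    using g by (simp add: \<psi>_def)
  let ?Z = "rotation_curve z \<theta> \<psi>" and ?R = "box (Complex (-\<epsilon>) 0) (Complex \<epsilon> (1 + \<epsilon>))"
  have Z_in: "?Z (Complex s \<phi>) \<in> polysector a b r" if "\<bar>s\<bar> \<le> \<epsilon>" "0 \<le> \<phi>" "\<phi> \<le> 1 + \<epsilon>" for s \<phi>
    using rotation_curve_in_polysector[OF \<open>block_margin \<epsilon> lo hi r' a b r\<close> z] \<theta> \<psi> that by blast
  have "closure ?R = cbox (Complex (-\<epsilon>) 0) (Complex \<epsilon> (1 + \<epsilon>))"
    using \<open>\<epsilon> > 0\<close> by (intro closure_box) (auto simp: box_ne_empty Basis_complex_def)
  then have Z_in_closure: "?Z \<zeta> \<in> polysector a b r" if "\<zeta> \<in> closure ?R" for \<zeta>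
    using Z_in[of "Re \<zeta>" "Im \<zeta>"] that by (simp add: in_cbox_complex_iff abs_le_iff)
  have ray_bound: "norm (f (?Z (of_real s))) \<le> c * E * monpow z N" if "\<bar>s\<bar> \<le> \<epsilon>" for s
  proof -
    have "?Z (of_real s) \<in> polysector a b r"
      using Z_in[OF that, of 0] \<open>\<epsilon> > 0\<close> by (simp add: complex_of_real_def)
    moreover have "\<forall>j. ?Z (of_real s) $ j = rcis (norm (?Z (of_real s) $ j)) (\<theta> $ j)"
      by (simp add: rotation_curve_real abs_mult)
    ultimately have "norm (f (?Z (of_real s))) \<le> c * monpow (?Z (of_real s)) N" by (rule ray)
    also have "\<dots> \<le> c * (E * monpow z N)"
    proof -
      have "\<bar>\<psi> $ j - \<theta> $ j\<bar> \<le> hi $ j - lo $ j" for j using \<theta>[of j] \<psi>[of j] by auto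
      then have "monpow (?Z (of_real s)) N \<le> E * monpow z N"
        unfolding E_def by (rule monpow_rotation_curve_real_le[OF that])
      then show ?thesis using \<open>c > 0\<close> by simp
    qed
    finally show ?thesis by (simp add: mult.assoc)
  qed
  have "0 < monpow z N" using z by (intro monpow_pos) (auto simp: angular_block_def)
  moreover have "0 < E" unfolding E_def by (intro prod_pos) auto
  ultimately have "0 < c * E * monpow z N" using \<open>c > 0\<close> by simp
  then have "norm (f (?Z \<i>)) \<le> M powr (1 - \<mu>) * (c * E * monpow z N) powr \<mu>"
    unfolding \<mu>_def using \<open>\<epsilon> > 0\<close> \<open>M > 0\<close> M Z_in_closure ray_bound
    by (intro two_constants_holomorphic_n[OF _ _ _ _ hol field_differentiable_rotation_curve]) auto
  then show ?thesis using rotation_curve_ii[of z \<psi> \<theta>] \<psi> by simp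
qed

lemma null_expansion_on_angular_block:
  fixes f :: "complex^'n \<Rightarrow> complex" and a b r \<theta> lo hi r' :: "real^'n" and N :: "nat^'n"
  assumes hol: "holomorphic_n f (polysector a b r)"
    and abdd: "asympt_bounded f a b r"
    and null_dir: "\<And>N. \<exists>c>0. \<forall>w\<in>polysector a b r.
                     (\<forall>j. w $ j = rcis (norm (w $ j)) (\<theta> $ j)) \<longrightarrow> norm (f w) \<le> c * monpow w N"
    and block: "\<And>j. a $ j < lo $ j \<and> lo $ j \<le> \<theta> $ j \<and> \<theta> $ j \<le> hi $ j \<and> hi $ j < b $ j \<and>
                  0 < r' $ j \<and> r' $ j < r $ j"
  shows "\<exists>C>0. \<forall>z\<in>angular_block lo hi r'. norm (f z) \<le> C * monpow z N"
proof -
  obtain \<epsilon> a2 b2 r3 where "\<epsilon> > 0" and "psub a2 b2 r3 a b r"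
    and sub: "polysector a2 b2 r3 \<subseteq> polysector a b r" and margin: "block_margin \<epsilon> lo hi r' a2 b2 r3"
    using exists_intermediate_polysector[of a lo hi b r' r] block by meson
  obtain M where "M > 0" and M: "\<And>w. w \<in> polysector a2 b2 r3 \<Longrightarrow> norm (f w) \<le> M"
    using abdd \<open>psub a2 b2 r3 a b r\<close> unfolding asympt_bounded_def bounded_pos by blast
  define \<mu> where "\<mu> = two_constants_exponent \<epsilon> (1 + \<epsilon>)"
  have "\<mu> > 0" using \<open>\<epsilon> > 0\<close> by (simp add: \<mu>_def two_constants_exponent_pos)
  define k where "k = nat \<lceil>1 / \<mu>\<rceil>"
  have "1 / \<mu> \<le> k" unfolding k_def by (rule real_nat_ceiling_ge)
  then have "1 \<le> k * \<mu>" using \<open>\<mu> > 0\<close> by (simp add: field_simps)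
  obtain c where "c > 0" and ray: "\<forall>w\<in>polysector a b r.
      (\<forall>j. w $ j = rcis (norm (w $ j)) (\<theta> $ j)) \<longrightarrow> norm (f w) \<le> c * monpow w (\<chi> j. k * N $ j)"
    using null_dir by blast
  define E where "E = (\<Prod>j\<in>UNIV. exp (\<epsilon> * (hi $ j - lo $ j)) ^ (\<chi> j. k * N $ j) $ j)"
  define P where "P = (\<Prod>j\<in>UNIV. (r' $ j) ^ N $ j)"
  have "E > 0" "P > 0" using block by (auto simp: E_def P_def intro!: prod_pos)
  have "norm (f z) \<le> (M powr (1 - \<mu>) * (c * E) powr \<mu> * P powr (k * \<mu> - 1)) * monpow z N"
    if z: "z \<in> angular_block lo hi r'" for z
  proof -
    have "norm (f z) \<le> M powr (1 - \<mu>) * (c * E * monpow z (\<chi> j. k * N $ j)) powr \<mu>"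
      unfolding \<mu>_def E_def using \<open>\<epsilon> > 0\<close> \<open>M > 0\<close> \<open>c > 0\<close> margin M ray sub block z
      by (intro norm_le_two_constants_on_angular_block[OF _ _ _ _ holomorphic_n_subset[OF hol sub]]) auto
    also have "\<dots> \<le> (M powr (1 - \<mu>) * (c * E) powr \<mu> * P powr (k * \<mu> - 1)) * monpow z N"
      unfolding monpow_mult_exponent mult.assoc[symmetric]
      using \<open>M > 0\<close> \<open>c > 0\<close> \<open>E > 0\<close> \<open>\<mu> > 0\<close> \<open>1 \<le> k * \<mu>\<close> z
      by (intro powr_interpolation_le monpow_pos)
         (auto simp: P_def angular_block_def less_imp_le intro: monpow_le_prod)
    finally show ?thesis .
  qed
  moreover have "0 < M powr (1 - \<mu>) * (c * E) powr \<mu> * P powr (k * \<mu> - 1)"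
    using \<open>M > 0\<close> \<open>c > 0\<close> \<open>E > 0\<close> \<open>P > 0\<close> by simp
  ultimately show ?thesis by blast
qed

lemma subpolysector_in_angular_block:
  assumes "psub a' b' r' a b r" "polysector a' b' r' \<noteq> {}" "\<And>j. a $ j < \<theta> $ j \<and> \<theta> $ j < b $ j"
  shows "\<exists>lo hi. (\<forall>j. a $ j < lo $ j \<and> lo $ j \<le> \<theta> $ j \<and> \<theta> $ j \<le> hi $ j \<and> hi $ j < b $ j \<and>
                      0 < r' $ j \<and> r' $ j < r $ j) \<and>
                polysector a' b' r' \<subseteq> angular_block lo hi r'"
proof -
  have nonempty: "sector (a' $ j) (b' $ j) (r' $ j) \<noteq> {}" for j
    using assms(2) by (auto simp: polysector_def)
  have "0 < r' $ j" for j using nonempty[of j] by (auto simp: sector_eq_rcis_image)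
  note subsector = subsector_arguments[OF assms(1)[unfolded psub_def, rule_format] nonempty]
  obtain lo hi where lohi: "\<And>j. a $ j < lo j \<and> hi j < b $ j \<and>
      (\<forall>z\<in>sector (a' $ j) (b' $ j) (r' $ j). \<exists>t\<in>{lo j..hi j}. z = rcis (norm z) t)"
    using subsector(2) by metis
  have "polysector a' b' r' \<subseteq> angular_block (\<chi> j. min (lo j) (\<theta> $ j)) (\<chi> j. max (hi j) (\<theta> $ j)) r'"
  proof
    fix z assume "z \<in> polysector a' b' r'"
    then have zj: "z $ j \<in> sector (a' $ j) (b' $ j) (r' $ j)" for j by (simp add: polysector_def)
    have "\<exists>t\<in>{min (lo j) (\<theta> $ j)..max (hi j) (\<theta> $ j)}. z $ j = rcis (norm (z $ j)) t" for j
      using lohi[of j] zj[of j] by force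
    then show "z \<in> angular_block (\<chi> j. min (lo j) (\<theta> $ j)) (\<chi> j. max (hi j) (\<theta> $ j)) r'"
      using zj by (auto simp: angular_block_def sector_def)
  qed
  then show ?thesis
    using lohi assms(3) subsector(1) \<open>\<And>j. 0 < r' $ j\<close> by (intro exI conjI) auto
qed

theorem proposition5p5:
  fixes f :: "complex^'n \<Rightarrow> complex" and a b r \<theta> :: "real^'n"
  assumes ab: "\<forall>j. a $ j < b $ j" and rpos: "\<forall>j. 0 < r $ j"
    and hol: "holomorphic_n f (polysector a b r)"
    and abdd: "asympt_bounded f a b r"
    and dir: "\<forall>j. a $ j < \<theta> $ j \<and> \<theta> $ j < b $ j"
    and null_dir: "\<forall>N::nat^'n. \<exists>c>0. \<forall>z\<in>polysector a b r.
                      (\<forall>j. z $ j = complex_of_real (norm (z $ j)) * cis (\<theta> $ j)) \<longrightarrow>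
                      norm (f z) \<le> c * monpow z N"
  shows "\<forall>a' b' r'. psub a' b' r' a b r \<longrightarrow>
           (\<forall>N::nat^'n. \<exists>c>0. \<forall>z\<in>polysector a' b' r'. norm (f z) \<le> c * monpow z N)"
proof (intro allI impI)
  have null_dir': "\<exists>c>0. \<forall>w\<in>polysector a b r.
      (\<forall>j. w $ j = rcis (norm (w $ j)) (\<theta> $ j)) \<longrightarrow> norm (f w) \<le> c * monpow w N" for N
    using null_dir by (simp add: rcis_def)
  fix a' b' r' :: "real^'n" and N :: "nat^'n"
  assume "psub a' b' r' a b r"
  show "\<exists>c>0. \<forall>z\<in>polysector a' b' r'. norm (f z) \<le> c * monpow z N"
  proof (cases "polysector a' b' r' = {}")
    case True
    then show ?thesis by (intro exI[of _ 1]) auto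
  next
    case False
    then obtain lo hi where block: "\<And>j. a $ j < lo $ j \<and> lo $ j \<le> \<theta> $ j \<and> \<theta> $ j \<le> hi $ j \<and>
        hi $ j < b $ j \<and> 0 < r' $ j \<and> r' $ j < r $ j"
      and sub: "polysector a' b' r' \<subseteq> angular_block lo hi r'"
      using subpolysector_in_angular_block[OF \<open>psub a' b' r' a b r\<close>] dir by meson
    obtain C where "C > 0" "\<forall>z\<in>angular_block lo hi r'. norm (f z) \<le> C * monpow z N"
      using null_expansion_on_angular_block[OF hol abdd null_dir' block] by blast
    then show ?thesis using sub by blast
  qed
qed

end
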